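(* Let $\Gamma$ be a finite simplicial graph with vertex set $V=\{a_0,\ldots,a_{n-1}\}$ ($n\ge1$), let $M$ be a positive integer, $B(M)=\{w\in A(\Gamma):\|w\|\le M\}$, and let $\sigma$ be defined on words as in the context. Then: (1) $\sigma$ gives a well-defined map $B(M)\to A(\Gamma)$; that is, if two words $s_1^{e_1}\cdots s_\ell^{e_\ell}$ and $t_1^{d_1}\cdots t_\ell^{d_\ell}$ of length $\ell=\|w\|$ represent the same element $w\in B(M)$, then their images under $\sigma$ are equal in $A(\Gamma)$. (2) If $s_1^{e_1}\cdots s_\ell^{e_\ell}$ is a canonical expression for $w\in B(M)$ and $\sigma(w)=s_1^{N_1}\cdots s_\ell^{N_\ell}$ as in the context, then $(s_1^{N_1},\ldots,s_\ell^{N_\ell})$ is a subsequence of the sequence $(u_i)_{i\ge0}$, i.e. there are indices $j_1<j_2<\cdots<j_\ell$ with $s_k^{N_k}=u_{j_k}$ for all $k$.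
   Context: $A(\Gamma)=\langle V\mid[a,b]=1\text{ for }\{a,b\}\in E(\Gamma)\rangle$; $\|w\|$ is the word length with respect to $V$. For a word $s_1^{e_1}\cdots s_\ell^{e_\ell}$ ($s_i\in V$, $e_i\in\{\pm1\}$, $\ell=\|w\|$) representing $w$, its right-counting vector $(f_1,\ldots,f_\ell)$ has $f_i=\min\|y\|$ over $y\in A(\Gamma)$ such that $s_i^{e_i}\cdots s_\ell^{e_\ell}=x\,s_i^{e_i}\,y$ for some $x\in\langle\mathrm{lk}_\Gamma(s_i)\rangle$ ($\mathrm{lk}_\Gamma(s)$ = vertices adjacent to $s$). The word is a canonical expression if (A) $f_1\ge\cdots\ge f_\ell$ and (B) whenever $f_i=f_j$, $i<j$, $s_i=a_p$, $s_j=a_q$, then $p<q$ and $[a_p,a_q]=1$. Define $N_i=\frac{3e_i-1}{2}\cdot 4^{M-1-f_i}$ and $\sigma(s_1^{e_1}\cdots s_\ell^{e_\ell})=s_1^{N_1}s_2^{N_2}\cdots s_\ell^{N_\ell}\in A(\Gamma)$. The sequence $(u_i)$: for $i\ge0$, $0\le j<2n$, $u_{2ni+j}=a_{\lfloor j/2\rfloor}^{\,r_{i,j}}$ with $r_{i,j}=(-2)^{2i+j-2\lfloor j/2\rfloor}$ (so $u_0=a_0,u_1=a_0^{-2},u_2=a_1,u_3=a_1^{-2},\ldots,u_{2n}=a_0^4,u_{2n+1}=a_0^{-8},\ldots$). *)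

theory Defs
  imports Main
begin

text \<open>Vertices of \<Gamma> are the naturals 0..n-1 (vertex p stands for a_p).
A letter is a generator with a sign: (p, True) = a_p, (p, False) = a_p^-1.
Words are letter lists; elements of the right-angled Artin group A(\<Gamma>) are
represented by words modulo the congruence generated by free cancellation
x x^-1 = 1 and the commutation of letters on adjacent vertices.\<close>

type_synonym letter = "nat \<times> bool"

definition inv_letter :: "letter \<Rightarrow> letter" where
  "inv_letter x = (fst x, \<not> snd x)"

inductive raag_step :: "(nat \<Rightarrow> nat \<Rightarrow> bool) \<Rightarrow> letter list \<Rightarrow> letter list \<Rightarrow> bool"
  for E where
  cancel: "raag_step E (u @ [x, inv_letter x] @ v) (u @ v)"
| comm: "E (fst x) (fst y) \<Longrightarrow> raag_step E (u @ [x, y] @ v) (u @ [y, x] @ v)"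

definition raag_eq :: "(nat \<Rightarrow> nat \<Rightarrow> bool) \<Rightarrow> letter list \<Rightarrow> letter list \<Rightarrow> bool" where
  "raag_eq E = equivclp (raag_step E)"

definition raag_norm :: "(nat \<Rightarrow> nat \<Rightarrow> bool) \<Rightarrow> letter list \<Rightarrow> nat" where
  "raag_norm E w = (LEAST m. \<exists>v. raag_eq E v w \<and> length v = m)"

definition simplicial_graph :: "nat \<Rightarrow> (nat \<Rightarrow> nat \<Rightarrow> bool) \<Rightarrow> bool" where
  "simplicial_graph n E \<longleftrightarrow> (\<forall>a b. E a b \<longrightarrow> E b a) \<and> (\<forall>a. \<not> E a a)
      \<and> (\<forall>a b. E a b \<longrightarrow> a < n \<and> b < n)"

definition word_over :: "nat \<Rightarrow> letter list \<Rightarrow> bool" where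
  "word_over n ws \<longleftrightarrow> (\<forall>c \<in> set ws. fst c < n)"

text \<open>Right-counting vector entry f_i (0-based index i): the minimal ||y|| such
that s_i^{e_i} ... s_l^{e_l} = x s_i^{e_i} y with x in the subgroup generated by
lk(s_i), i.e. x represented by a word in the letters of lk(s_i).\<close>
definition rcount :: "(nat \<Rightarrow> nat \<Rightarrow> bool) \<Rightarrow> letter list \<Rightarrow> nat \<Rightarrow> nat" where
  "rcount E ws i = (LEAST m. \<exists>x y. (\<forall>c \<in> set x. E (fst (ws ! i)) (fst c))
       \<and> raag_eq E (drop i ws) (x @ [ws ! i] @ y) \<and> raag_norm E y = m)"

definition canonical_expr :: "(nat \<Rightarrow> nat \<Rightarrow> bool) \<Rightarrow> letter list \<Rightarrow> bool" where
  "canonical_expr E ws \<longleftrightarrow>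
     (\<forall>i j. i < j \<and> j < length ws \<longrightarrow> rcount E ws j \<le> rcount E ws i) \<and>
     (\<forall>i j. i < j \<and> j < length ws \<and> rcount E ws i = rcount E ws j \<longrightarrow>
        fst (ws ! i) < fst (ws ! j) \<and>
        raag_eq E [(fst (ws ! i), True), (fst (ws ! j), True)]
                  [(fst (ws ! j), True), (fst (ws ! i), True)])"

text \<open>N_i = ((3 e_i - 1)/2) * 4^(M-1-f_i).\<close>
definition sig_exp :: "(nat \<Rightarrow> nat \<Rightarrow> bool) \<Rightarrow> nat \<Rightarrow> letter list \<Rightarrow> nat \<Rightarrow> int" where
  "sig_exp E M ws i = (if snd (ws ! i) then 1 else -2) * 4 ^ (M - 1 - rcount E ws i)"

definition gpow :: "nat \<Rightarrow> int \<Rightarrow> letter list" where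
  "gpow a N = replicate (nat \<bar>N\<bar>) (a, N > 0)"

definition sigma :: "(nat \<Rightarrow> nat \<Rightarrow> bool) \<Rightarrow> nat \<Rightarrow> letter list \<Rightarrow> letter list" where
  "sigma E M ws = concat (map (\<lambda>i. gpow (fst (ws ! i)) (sig_exp E M ws i)) [0..<length ws])"

text \<open>u_k as a pair (generator index, exponent):
u_{2ni+j} = a_{j div 2}^{(-2)^(2i + j - 2 (j div 2))}.\<close>
definition useq :: "nat \<Rightarrow> nat \<Rightarrow> nat \<times> int" where
  "useq n k = (k mod (2*n) div 2, (-2::int) ^ (2 * (k div (2*n)) + k mod (2*n) mod 2))"

end

theory Submission
  imports Defs
begin

(*
  The relations of A(Gamma) are generated by swapping two adjacent
  commuting letters and by cancellation steps, which delete a letter together with a later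
  inverse when every letter in between commutes with it. Cancellation steps are locally
  confluent modulo swaps, and swaps can be postponed past cancellations; hence any two words
  that are equal in A(Gamma) cancel down to swap-equivalent words. A geodesic word admits no
  cancellation step, so two geodesic words for the same element differ by swaps alone.
  The right-counting entry of a letter moves with the letter under a swap, so swapping two
  adjacent commuting letters of the word only swaps two adjacent commuting powers in sigma.

  (2) With s_k = a_(p_k), the power s_k^(N_k) is u_(j_k) for
  j_k = 2n (M - 1 - f_k) + 2 p_k + [e_k = -1]. Condition (A) makes the block index
  M - 1 - f_k weakly increasing, and condition (B) makes the offset 2 p_k + [e_k = -1]
  strictly increasing inside a block.
*)

section \<open>Equality of words in A(\<Gamma>)\<close>

lemma raag_eq_refl [simp]: "raag_eq E w w"
  by (simp add: raag_eq_def)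

lemma raag_eq_sym: "raag_eq E u v \<Longrightarrow> raag_eq E v u"
  by (simp add: raag_eq_def equivclp_sym)

lemma raag_eq_trans: "raag_eq E u v \<Longrightarrow> raag_eq E v w \<Longrightarrow> raag_eq E u w"
  unfolding raag_eq_def by (rule equivclp_trans)

lemma raag_step_imp_raag_eq: "raag_step E u v \<Longrightarrow> raag_eq E u v"
  unfolding raag_eq_def by blast

lemma raag_step_context: "raag_step E u v \<Longrightarrow> raag_step E (a @ u @ b) (a @ v @ b)"
proof (induction rule: raag_step.induct)
  case (cancel u x v)
  show ?case using raag_step.cancel[of E "a @ u" x "v @ b"] by simp
next
  case (comm x y u v)
  then show ?case using raag_step.comm[of E x y "a @ u" "v @ b"] by simp
qed

lemma raag_eq_context: "raag_eq E u v \<Longrightarrow> raag_eq E (a @ u @ b) (a @ v @ b)"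
  unfolding raag_eq_def
  by (induction rule: equivclp_induct) (auto intro: equivclp_into_equivclp raag_step_context)

lemma raag_eq_append: "raag_eq E u u' \<Longrightarrow> raag_eq E v v' \<Longrightarrow> raag_eq E (u @ v) (u' @ v')"
  using raag_eq_context[of E u u' "[]" v] raag_eq_context[of E v v' u' "[]"] raag_eq_trans
  by fastforce

lemma raag_eq_Cons: "raag_eq E u u' \<Longrightarrow> raag_eq E (x # u) (x # u')"
  using raag_eq_append[of E "[x]" "[x]" u u'] by simp

lemma raag_norm_le_length: "raag_eq E v w \<Longrightarrow> raag_norm E w \<le> length v"
  unfolding raag_norm_def by (rule Least_le) auto

lemma raag_norm_raag_eq:
  assumes "raag_eq E u v"
  shows "raag_norm E u = raag_norm E v"
proof -
  have "raag_eq E w u = raag_eq E w v" for w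
    using assms raag_eq_sym raag_eq_trans by metis
  then show ?thesis
    unfolding raag_norm_def by simp
qed

lemma raag_eq_commute_letter:
  "(\<forall>y \<in> set ys. E (fst x) (fst y)) \<Longrightarrow> raag_eq E (x # ys) (ys @ [x])"
proof (induction ys)
  case (Cons y ys)
  have "raag_step E ([] @ [x, y] @ ys) ([] @ [y, x] @ ys)"
    using Cons.prems by (intro raag_step.comm) simp
  then have "raag_eq E (x # y # ys) (y # x # ys)"
    by (simp add: raag_step_imp_raag_eq)
  moreover have "raag_eq E (y # x # ys) (y # ys @ [x])"
    using Cons by (auto intro: raag_eq_Cons)
  ultimately show ?case by (auto intro: raag_eq_trans)
qed simp

lemma raag_eq_commute_blocks:
  "(\<forall>x \<in> set xs. \<forall>y \<in> set ys. E (fst x) (fst y)) \<Longrightarrow> raag_eq E (xs @ ys) (ys @ xs)"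
proof (induction xs)
  case (Cons x xs)
  have "raag_eq E (x # xs @ ys) (x # ys @ xs)"
    using Cons by (auto intro: raag_eq_Cons)
  moreover have "raag_eq E (x # ys @ xs) (ys @ [x] @ xs)"
    using raag_eq_commute_letter[of ys E x] Cons.prems raag_eq_append[of E "x # ys" "ys @ [x]" xs xs]
    by auto
  ultimately show ?case by (auto intro: raag_eq_trans)
qed simp

lemma fst_inv_letter [simp]: "fst (inv_letter x) = fst x"
  by (simp add: inv_letter_def)

lemma inv_letter_inv_letter [simp]: "inv_letter (inv_letter x) = x"
  by (simp add: inv_letter_def)

definition skip_pair :: "nat \<Rightarrow> nat \<Rightarrow> nat \<Rightarrow> nat" where
  "skip_pair i j m = (if m < i then m else if Suc m < j then Suc m else Suc (Suc m))"

definition remove_pair :: "nat \<Rightarrow> nat \<Rightarrow> 'a list \<Rightarrow> 'a list" where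
  "remove_pair i j u = map (\<lambda>m. u ! skip_pair i j m) [0..<length u - 2]"

definition swap_index :: "nat \<Rightarrow> nat \<Rightarrow> nat" where
  "swap_index k m = (if m = k then Suc k else if m = Suc k then k else m)"

definition swap_adjacent :: "nat \<Rightarrow> 'a list \<Rightarrow> 'a list" where
  "swap_adjacent k u = map (\<lambda>m. u ! swap_index k m) [0..<length u]"

lemma length_remove_pair [simp]: "length (remove_pair i j u) = length u - 2"
  by (simp add: remove_pair_def)

lemma nth_remove_pair [simp]: "m < length u - 2 \<Longrightarrow> remove_pair i j u ! m = u ! skip_pair i j m"
  by (simp add: remove_pair_def)

lemma length_swap_adjacent [simp]: "length (swap_adjacent k u) = length u"
  by (simp add: swap_adjacent_def)

lemma nth_swap_adjacent [simp]: "m < length u \<Longrightarrow> swap_adjacent k u ! m = u ! swap_index k m"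
  by (simp add: swap_adjacent_def)

lemma swap_index_simps [simp]:
  "swap_index k k = Suc k" "swap_index k (Suc k) = k"
  "m \<noteq> k \<Longrightarrow> m \<noteq> Suc k \<Longrightarrow> swap_index k m = m"
  by (simp_all add: swap_index_def)

lemma swap_index_swap_index [simp]: "swap_index k (swap_index k m) = m"
  by (simp add: swap_index_def)

lemma swap_index_less: "m < L \<Longrightarrow> Suc k < L \<Longrightarrow> swap_index k m < L"
  by (simp add: swap_index_def)

lemma skip_pair_less: "m < L - 2 \<Longrightarrow> i < j \<Longrightarrow> skip_pair i j m < L"
  by (auto simp: skip_pair_def)

lemma skip_pair_mono: "m < m' \<Longrightarrow> skip_pair i j m < skip_pair i j m'"
  by (simp add: skip_pair_def)

lemma swap_index_skip_pair:
  assumes "i < j" "k \<notin> {i, j}" "Suc k \<notin> {i, j}" "Suc k < L" "j < L"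
  obtains k' where "skip_pair i j k' = k" "skip_pair i j (Suc k') = Suc k" "Suc k' < L - 2"
    "\<And>m. swap_index k (skip_pair i j m) = skip_pair i j (swap_index k' m)"
proof -
  have "Suc k < i \<or> (i < k \<and> Suc k < j) \<or> j < k"
    using assms(1-3) by auto
  then show ?thesis
  proof (elim disjE)
    assume "Suc k < i"
    with assms show ?thesis
      by (intro that[of k]) (auto simp: skip_pair_def swap_index_def)
  next
    assume between: "i < k \<and> Suc k < j"
    then have "k = Suc (k - 1)" by arith
    then obtain k' where "k = Suc k'" by blast
    with between assms show ?thesis
      by (intro that[of k']) (auto simp: skip_pair_def swap_index_def)
  next
    assume "j < k"
    with assms(1) have "k = Suc (Suc (k - 2))" by arith
    then obtain k' where "k = Suc (Suc k')" by blast
    with \<open>j < k\<close> assms show ?thesis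
      by (intro that[of k']) (auto simp: skip_pair_def swap_index_def)
  qed
qed

lemma swap_index_skip_pair_touching:
  assumes "i < j" "k = i \<or> Suc k = i \<or> k = j \<or> Suc k = j" "\<not> (k = i \<and> Suc k = j)"
  shows "swap_index k (skip_pair (swap_index k i) (swap_index k j) m) = skip_pair i j m"
  using assms(2)
  by (elim disjE) (use assms in \<open>simp add: swap_index_simps, simp add: skip_pair_def swap_index_def\<close>)+

lemma skip_pair_skip_pair:
  assumes "i < j" "i' < j'" "i < i'" "i' \<noteq> j" "j' \<noteq> j" "j < L" "j' < L"
  obtains p q r s where "p < q" "q < L - 2" "skip_pair i j p = i'" "skip_pair i j q = j'"
    "r < s" "s < L - 2" "skip_pair i' j' r = i" "skip_pair i' j' s = j"
    "\<And>m. skip_pair i j (skip_pair p q m) = skip_pair i' j' (skip_pair r s m)"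
proof -
  have "j < i' \<or> (i' < j \<and> j < j') \<or> j' < j"
    using assms(2,4,5) by auto
  then show ?thesis
  proof (elim disjE)
    assume "j < i'"
    define p q where "p = i' - 2" and "q = j' - 2"
    have pq: "i' = Suc (Suc p)" "j' = Suc (Suc q)"
      using \<open>j < i'\<close> assms(1,2) unfolding p_def q_def by arith+
    have "skip_pair i j (skip_pair p q m) = skip_pair i' j' (skip_pair i j m)" for m
      using \<open>j < i'\<close> assms(1,2) unfolding pq by (simp add: skip_pair_def)
    with \<open>j < i'\<close> assms show ?thesis
      by (intro that[of p q i j]) (auto simp: pq skip_pair_def)
  next
    assume crossing: "i' < j \<and> j < j'"
    define p q s where "p = i' - 1" and "q = j' - 2" and "s = j - 1"
    have pqs: "i' = Suc p" "j' = Suc (Suc q)" "j = Suc s"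
      using crossing assms(3) unfolding p_def q_def s_def by arith+
    have "skip_pair i j (skip_pair p q m) = skip_pair i' j' (skip_pair i s m)" for m
      using crossing assms(3) unfolding pqs by (simp add: skip_pair_def)
    with crossing assms show ?thesis
      by (intro that[of p q i s]) (auto simp: pqs skip_pair_def)
  next
    assume "j' < j"
    define p q s where "p = i' - 1" and "q = j' - 1" and "s = j - 2"
    have pqs: "i' = Suc p" "j' = Suc q" "j = Suc (Suc s)"
      using \<open>j' < j\<close> assms(2,3) unfolding p_def q_def s_def by arith+
    have "skip_pair i j (skip_pair p q m) = skip_pair i' j' (skip_pair i s m)" for m
      using \<open>j' < j\<close> assms(2,3) unfolding pqs by (simp add: skip_pair_def)
    with \<open>j' < j\<close> assms show ?thesis
      by (intro that[of p q i s]) (auto simp: pqs skip_pair_def)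
  qed
qed

lemma swap_adjacent_eq_append:
  assumes "Suc k < length u"
  shows "swap_adjacent k u = take k u @ [u ! Suc k, u ! k] @ drop (Suc (Suc k)) u"
proof -
  have "i = Suc (Suc (i - 2))" if "\<not> i < k" "i \<noteq> k" "i \<noteq> Suc k" for i
    using that by arith
  then show ?thesis
    using assms by (intro nth_equalityI) (auto simp: nth_append swap_index_def)
qed

lemma remove_pair_eq_append:
  "i < j \<Longrightarrow> j < length u \<Longrightarrow>
     remove_pair i j u = take i u @ take (j - Suc i) (drop (Suc i) u) @ drop (Suc j) u"
  by (rule nth_equalityI) (auto simp: nth_append min_def skip_pair_def)

lemma take_split_at:
  assumes "i < j" "j \<le> length u"
  shows "take j u = take i u @ u ! i # take (j - Suc i) (drop (Suc i) u)"
proof -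
  have "take j u = take i u @ take (j - i) (drop i u)"
    using take_add[of i "j - i" u] assms(1) by simp
  also have "drop i u = u ! i # drop (Suc i) u"
    using assms by (simp add: Cons_nth_drop_Suc)
  also have "j - i = Suc (j - Suc i)"
    using assms(1) by simp
  finally show ?thesis by simp
qed

lemma drop_split_at:
  assumes "j < j'" "j' < length u"
  shows "drop (Suc j) u = take (j' - Suc j) (drop (Suc j) u) @ u ! j' # drop (Suc j') u"
proof -
  have "drop (j' - Suc j) (drop (Suc j) u) = u ! j' # drop (Suc j') u"
    using assms by (simp add: Cons_nth_drop_Suc)
  then show ?thesis by (metis append_take_drop_id)
qed

lemma split_at_pair:
  assumes "i < j" "j < length u"
  shows "u = take i u @ [u ! i] @ take (j - Suc i) (drop (Suc i) u) @ [u ! j] @ drop (Suc j) u"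
  using take_split_at[of i j u] Cons_nth_drop_Suc[of j u] append_take_drop_id[of j u] assms
  by simp

lemma set_take_drop_between:
  "y \<in> set (take (j - Suc i) (drop (Suc i) u)) \<Longrightarrow> \<exists>t. i < t \<and> t < j \<and> y = u ! t"
  by (auto simp: in_set_conv_nth) (metis add_Suc_right add_Suc less_add_Suc1 less_diff_conv add.commute)

definition swap_step :: "(nat \<Rightarrow> nat \<Rightarrow> bool) \<Rightarrow> letter list \<Rightarrow> letter list \<Rightarrow> bool" where
  "swap_step E u v \<longleftrightarrow>
     (\<exists>k. Suc k < length u \<and> E (fst (u ! k)) (fst (u ! Suc k)) \<and> v = swap_adjacent k u)"

definition cancel_pair :: "(nat \<Rightarrow> nat \<Rightarrow> bool) \<Rightarrow> letter list \<Rightarrow> nat \<Rightarrow> nat \<Rightarrow> bool" where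
  "cancel_pair E u i j \<longleftrightarrow> i < j \<and> j < length u \<and> u ! j = inv_letter (u ! i)
     \<and> (\<forall>t. i < t \<and> t < j \<longrightarrow> E (fst (u ! i)) (fst (u ! t)))"

definition cancel_step :: "(nat \<Rightarrow> nat \<Rightarrow> bool) \<Rightarrow> letter list \<Rightarrow> letter list \<Rightarrow> bool" where
  "cancel_step E u a \<longleftrightarrow> (\<exists>i j. cancel_pair E u i j \<and> a = remove_pair i j u)"

lemma swap_step_append: "E (fst x) (fst y) \<Longrightarrow> swap_step E (p @ [x, y] @ s) (p @ [y, x] @ s)"
  unfolding swap_step_def
  by (rule exI[of _ "length p"]) (simp add: swap_adjacent_eq_append nth_append)

lemma length_cancel_step: "cancel_step E u a \<Longrightarrow> length a + 2 = length u"
  unfolding cancel_step_def cancel_pair_def by auto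

lemma cancel_steps_length: "(cancel_step E)\<^sup>*\<^sup>* u a \<Longrightarrow> length a \<le> length u"
  by (induction rule: rtranclp_induct) (auto dest: length_cancel_step)

lemma cancel_step_raag_eq:
  assumes "cancel_step E u a"
  shows "raag_eq E u a"
proof -
  obtain i j where ij: "cancel_pair E u i j" and a: "a = remove_pair i j u"
    using assms unfolding cancel_step_def by blast
  define p s where "p = take i u" and "s = drop (Suc j) u"
  define m where "m = take (j - Suc i) (drop (Suc i) u)"
  have u: "u = p @ [u ! i] @ m @ [u ! j] @ s" and a: "a = p @ m @ s"
    using ij split_at_pair[of i j u] remove_pair_eq_append[of i j u]
    unfolding a p_def s_def m_def cancel_pair_def by simp_all
  have "\<forall>y \<in> set m. E (fst (u ! i)) (fst y)"
    using ij unfolding m_def cancel_pair_def by (auto dest: set_take_drop_between)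
  then have "raag_eq E u (p @ (m @ [u ! i]) @ [u ! j] @ s)"
    using u raag_eq_context[OF raag_eq_commute_letter] by (metis append.assoc append_Cons append_Nil)
  moreover have "raag_step E ((p @ m) @ [u ! i, u ! j] @ s) ((p @ m) @ s)"
    using raag_step.cancel[of E "p @ m" "u ! i" s] ij by (simp add: cancel_pair_def)
  ultimately show ?thesis
    using a raag_step_imp_raag_eq raag_eq_trans by fastforce
qed

lemma swap_step_remove_pair:
  assumes k: "Suc k < length u" "E (fst (u ! k)) (fst (u ! Suc k))"
    and ij: "i < j" "j < length u" "k \<notin> {i, j}" "Suc k \<notin> {i, j}"
  shows "swap_step E (remove_pair i j u) (remove_pair i j (swap_adjacent k u))"
proof -
  obtain k' where k': "skip_pair i j k' = k" "skip_pair i j (Suc k') = Suc k"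
      "Suc k' < length u - 2" "\<And>m. swap_index k (skip_pair i j m) = skip_pair i j (swap_index k' m)"
    using swap_index_skip_pair[OF ij(1,3,4) k(1) ij(2)] by blast
  have "remove_pair i j (swap_adjacent k u) = swap_adjacent k' (remove_pair i j u)"
    using k'(3,4) ij k(1) by (intro nth_equalityI) (auto simp: skip_pair_less swap_index_less)
  then show ?thesis
    unfolding swap_step_def using k' k(2) by auto
qed

lemma remove_pair_swap_adjacent_touching:
  assumes "Suc k < length u" "i < j" "j < length u"
    and "k = i \<or> Suc k = i \<or> k = j \<or> Suc k = j" "\<not> (k = i \<and> Suc k = j)"
  shows "remove_pair (swap_index k i) (swap_index k j) (swap_adjacent k u) = remove_pair i j u"
proof -
  have "swap_index k i < swap_index k j"
    using assms(2,4,5) by (auto simp: swap_index_def)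
  then show ?thesis
    using assms swap_index_skip_pair_touching[OF assms(2,4,5)]
    by (intro nth_equalityI) (auto simp: skip_pair_less)
qed

section \<open>Confluence of cancellation modulo swaps\<close>

lemma cancel_pair_remove_pair:
  assumes "cancel_pair E u i' j'" "p < q" "q < length u - 2"
    and "i < j" "skip_pair i j p = i'" "skip_pair i j q = j'"
  shows "cancel_pair E (remove_pair i j u) p q"
proof -
  have "i' < skip_pair i j t \<and> skip_pair i j t < j'" if "p < t" "t < q" for t
    using skip_pair_mono[OF that(1), of i j] skip_pair_mono[OF that(2), of i j] assms(5,6) by simp
  then show ?thesis
    using assms by (auto simp: cancel_pair_def)
qed

lemma remove_pair_remove_pair:
  assumes "p < q" "i < j" "r < s" "i' < j'"
    and "\<And>m. skip_pair i j (skip_pair p q m) = skip_pair i' j' (skip_pair r s m)"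
  shows "remove_pair p q (remove_pair i j u) = remove_pair r s (remove_pair i' j' u)"
proof (rule nth_equalityI)
  fix m
  assume "m < length (remove_pair p q (remove_pair i j u))"
  then have "m < length u - 2 - 2" by simp
  then show "remove_pair p q (remove_pair i j u) ! m = remove_pair r s (remove_pair i' j' u) ! m"
    using assms skip_pair_less[of m "length u - 2"] by simp
qed simp

lemma swaps_move_letter:
  "\<forall>y \<in> set ys. E (fst y) (fst x) \<Longrightarrow> (swap_step E)\<^sup>*\<^sup>* (p @ ys @ [x] @ s) (p @ [x] @ ys @ s)"
proof (induction ys arbitrary: p)
  case (Cons y ys)
  have "(swap_step E)\<^sup>*\<^sup>* (p @ (y # ys) @ [x] @ s) (p @ [y, x] @ ys @ s)"
    using Cons.IH[of "p @ [y]"] Cons.prems by simp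
  moreover have "swap_step E (p @ [y, x] @ ys @ s) (p @ [x, y] @ ys @ s)"
    using Cons.prems swap_step_append by simp
  ultimately show ?case by simp
qed simp

locale commutation_graph =
  fixes E :: "nat \<Rightarrow> nat \<Rightarrow> bool"
  assumes E_sym: "E a b \<Longrightarrow> E b a"
    and E_irrefl: "\<not> E a a"
begin

lemma swap_step_sym:
  assumes "swap_step E u v"
  shows "swap_step E v u"
proof -
  obtain k where k: "Suc k < length u" "E (fst (u ! k)) (fst (u ! Suc k))" "v = swap_adjacent k u"
    using assms unfolding swap_step_def by blast
  have "u = swap_adjacent k v"
    using k(1,3) by (intro nth_equalityI) (auto simp: swap_index_less)
  then show ?thesis
    using k E_sym[OF k(2)] unfolding swap_step_def by auto
qed

lemma swap_steps_sym: "(swap_step E)\<^sup>*\<^sup>* u v \<Longrightarrow> (swap_step E)\<^sup>*\<^sup>* v u"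
  by (induction rule: rtranclp_induct) (auto intro: converse_rtranclp_into_rtranclp swap_step_sym)

lemma cancel_pair_not_adjacent_swap:
  "cancel_pair E u i j \<Longrightarrow> E (fst (u ! k)) (fst (u ! Suc k)) \<Longrightarrow> \<not> (k = i \<and> Suc k = j)"
  using E_irrefl by (auto simp: cancel_pair_def)

lemma cancel_pair_swap_adjacent:
  assumes k: "Suc k < length u" "E (fst (u ! k)) (fst (u ! Suc k))"
    and ij: "cancel_pair E u i j"
  shows "cancel_pair E (swap_adjacent k u) (swap_index k i) (swap_index k j)"
proof -
  let ?v = "swap_adjacent k u"
  have not_both: "\<not> (k = i \<and> Suc k = j)"
    using cancel_pair_not_adjacent_swap[OF ij k(2)] .
  have lt: "i < j" "j < length u"
    using ij by (auto simp: cancel_pair_def)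
  have at_pair: "?v ! swap_index k i = u ! i" "?v ! swap_index k j = u ! j"
    using lt k(1) by (simp_all add: swap_index_less)
  have "E (fst (u ! i)) (fst (?v ! t))" if t: "swap_index k i < t" "t < swap_index k j" for t
  proof -
    have "t < length u"
      using t lt k(1) by (auto simp: swap_index_def split: if_splits)
    moreover have "i < swap_index k t \<and> swap_index k t < j
        \<or> swap_index k t = k \<and> (Suc k = i \<or> Suc k = j)
        \<or> swap_index k t = Suc k \<and> (k = i \<or> k = j)"
      using t lt not_both by (auto simp: swap_index_def split: if_splits)
    ultimately show ?thesis
      using ij k(2) E_sym[OF k(2)] by (auto simp: cancel_pair_def)
  qed
  moreover have "swap_index k i < swap_index k j" "swap_index k j < length u"
    using lt not_both k(1) by (auto simp: swap_index_def)
  ultimately show ?thesis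
    using ij at_pair by (simp add: cancel_pair_def)
qed

lemma swap_cancel_commute:
  assumes "swap_step E u v" "cancel_step E u a"
  shows "\<exists>b. cancel_step E v b \<and> (b = a \<or> swap_step E a b)"
proof -
  obtain k where k: "Suc k < length u" "E (fst (u ! k)) (fst (u ! Suc k))" "v = swap_adjacent k u"
    using assms(1) unfolding swap_step_def by blast
  obtain i j where ij: "cancel_pair E u i j" and a: "a = remove_pair i j u"
    using assms(2) unfolding cancel_step_def by blast
  have lt: "i < j" "j < length u"
    using ij by (auto simp: cancel_pair_def)
  let ?b = "remove_pair (swap_index k i) (swap_index k j) v"
  have "cancel_step E v ?b"
    using cancel_pair_swap_adjacent[OF k(1,2) ij] k(3) unfolding cancel_step_def by blast
  moreover have "?b = a \<or> swap_step E a ?b"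
  proof (cases "k = i \<or> Suc k = i \<or> k = j \<or> Suc k = j")
    case True
    then show ?thesis
      using remove_pair_swap_adjacent_touching[OF k(1) lt True]
        cancel_pair_not_adjacent_swap[OF ij k(2)] k(3) a by simp
  next
    case False
    then show ?thesis
      using swap_step_remove_pair[of k u E i j] k lt a by simp
  qed
  ultimately show ?thesis by blast
qed

lemma cancel_pair_unique:
  assumes "cancel_pair E u i j"
  shows "cancel_pair E u i j' \<Longrightarrow> j' = j" and "cancel_pair E u i' j \<Longrightarrow> i' = i"
proof -
  have "\<not> E (fst (u ! i)) (fst (u ! j))"
    using assms E_irrefl by (simp add: cancel_pair_def)
  then show "cancel_pair E u i j' \<Longrightarrow> j' = j" and "cancel_pair E u i' j \<Longrightarrow> i' = i"
    using assms E_irrefl unfolding cancel_pair_def by (metis fst_inv_letter linorder_neqE_nat)+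
qed

lemma cancel_pairs_overlap_join:
  assumes ij: "cancel_pair E u i j" and jk: "cancel_pair E u j k"
  shows "(swap_step E)\<^sup>*\<^sup>* (remove_pair i j u) (remove_pair j k u)"
proof -
  have lt: "i < j" "j < k" "k < length u"
    using ij jk by (auto simp: cancel_pair_def)
  define p m1 m2 s where "p = take i u" and "m1 = take (j - Suc i) (drop (Suc i) u)"
    and "m2 = take (k - Suc j) (drop (Suc j) u)" and "s = drop (Suc k) u"
  have "u ! k = u ! i"
    using ij jk by (simp add: cancel_pair_def)
  then have "remove_pair i j u = p @ (m1 @ m2) @ [u ! i] @ s"
    and "remove_pair j k u = p @ [u ! i] @ (m1 @ m2) @ s"
    using lt remove_pair_eq_append[of i j u] remove_pair_eq_append[of j k u]
      take_split_at[of i j u] drop_split_at[of j k u]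
    unfolding p_def m1_def m2_def s_def by simp_all
  moreover have "E (fst y) (fst (u ! i))" if "y \<in> set (m1 @ m2)" for y
  proof -
    have "E (fst (u ! i)) (fst y)"
      using that ij jk unfolding m1_def m2_def cancel_pair_def
      by (auto dest!: set_take_drop_between)
    then show ?thesis by (rule E_sym)
  qed
  ultimately show ?thesis
    using swaps_move_letter by metis
qed

lemma cancel_pairs_disjoint_join:
  assumes ij: "cancel_pair E u i j" and ij': "cancel_pair E u i' j'"
    and "i < i'" "i' \<noteq> j" "j' \<noteq> j"
  shows "\<exists>c. cancel_step E (remove_pair i j u) c \<and> cancel_step E (remove_pair i' j' u) c"
proof -
  have lt: "i < j" "j < length u" "i' < j'" "j' < length u"
    using ij ij' by (auto simp: cancel_pair_def)
  obtain p q r s where pq: "p < q" "q < length u - 2" "skip_pair i j p = i'" "skip_pair i j q = j'"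
    and rs: "r < s" "s < length u - 2" "skip_pair i' j' r = i" "skip_pair i' j' s = j"
    and same: "\<And>m. skip_pair i j (skip_pair p q m) = skip_pair i' j' (skip_pair r s m)"
    using skip_pair_skip_pair[OF lt(1,3) assms(3-5) lt(2,4)] by blast
  have "cancel_step E (remove_pair i j u) (remove_pair p q (remove_pair i j u))"
    using cancel_pair_remove_pair[OF ij' pq(1,2) lt(1) pq(3,4)] unfolding cancel_step_def by blast
  moreover have "cancel_step E (remove_pair i' j' u) (remove_pair r s (remove_pair i' j' u))"
    using cancel_pair_remove_pair[OF ij rs(1,2) lt(3) rs(3,4)] unfolding cancel_step_def by blast
  moreover have "remove_pair p q (remove_pair i j u) = remove_pair r s (remove_pair i' j' u)"
    using remove_pair_remove_pair[OF pq(1) lt(1) rs(1) lt(3) same] .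
  ultimately show ?thesis by auto
qed

lemma cancel_pairs_join:
  assumes ij: "cancel_pair E u i j" and ij': "cancel_pair E u i' j'" and "i \<le> i'"
  shows "\<exists>c d. (cancel_step E)\<^sup>*\<^sup>* (remove_pair i j u) c
    \<and> (cancel_step E)\<^sup>*\<^sup>* (remove_pair i' j' u) d \<and> (swap_step E)\<^sup>*\<^sup>* c d"
proof (cases "i = i'")
  case True
  then show ?thesis
    using cancel_pair_unique(1)[OF ij] ij' by blast
next
  case False
  with \<open>i \<le> i'\<close> have "i < i'" by simp
  consider "i' = j" | "j' = j" | "i' \<noteq> j" "j' \<noteq> j" by blast
  then show ?thesis
  proof cases
    case 1
    then show ?thesis
      using cancel_pairs_overlap_join[OF ij] ij' by blast
  next
    case 2
    then show ?thesis
      using cancel_pair_unique(2)[OF ij] ij' \<open>i < i'\<close> by simp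
  next
    case 3
    then show ?thesis
      using cancel_pairs_disjoint_join[OF ij ij' \<open>i < i'\<close>] by blast
  qed
qed

lemma cancel_step_local_confluence:
  assumes "cancel_step E u a" "cancel_step E u b"
  shows "\<exists>c d. (cancel_step E)\<^sup>*\<^sup>* a c \<and> (cancel_step E)\<^sup>*\<^sup>* b d \<and> (swap_step E)\<^sup>*\<^sup>* c d"
proof -
  obtain i j i' j' where "cancel_pair E u i j" "a = remove_pair i j u"
      "cancel_pair E u i' j'" "b = remove_pair i' j' u"
    using assms unfolding cancel_step_def by blast
  then show ?thesis
    using cancel_pairs_join[of u i j i' j'] cancel_pairs_join[of u i' j' i j]
      swap_steps_sym nat_le_linear by metis
qed

lemma swaps_cancel_step_commute:
  "(swap_step E)\<^sup>*\<^sup>* u v \<Longrightarrow> cancel_step E u a \<Longrightarrow> \<exists>b. cancel_step E v b \<and> (swap_step E)\<^sup>*\<^sup>* a b"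
proof (induction rule: rtranclp_induct)
  case (step w v)
  then obtain b where "cancel_step E w b" "(swap_step E)\<^sup>*\<^sup>* a b"
    by blast
  then show ?case
    using swap_cancel_commute[OF step(2)] by (metis rtranclp.rtrancl_into_rtrancl)
qed blast

lemma swaps_cancels_commute:
  "(cancel_step E)\<^sup>*\<^sup>* u a \<Longrightarrow> (swap_step E)\<^sup>*\<^sup>* u v
     \<Longrightarrow> \<exists>b. (cancel_step E)\<^sup>*\<^sup>* v b \<and> (swap_step E)\<^sup>*\<^sup>* a b"
proof (induction arbitrary: v rule: converse_rtranclp_induct)
  case (step u u')
  obtain b' where "cancel_step E v b'" "(swap_step E)\<^sup>*\<^sup>* u' b'"
    using swaps_cancel_step_commute[OF step.prems step.hyps(1)] by blast
  then show ?case
    using step.IH by (meson converse_rtranclp_into_rtranclp)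
qed blast

lemma cancels_confluent_modulo_swaps:
  "(cancel_step E)\<^sup>*\<^sup>* u a \<Longrightarrow> (cancel_step E)\<^sup>*\<^sup>* u b
     \<Longrightarrow> \<exists>c d. (cancel_step E)\<^sup>*\<^sup>* a c \<and> (cancel_step E)\<^sup>*\<^sup>* b d \<and> (swap_step E)\<^sup>*\<^sup>* c d"
proof (induction "length u" arbitrary: u a b rule: less_induct)
  case less
  show ?case
  proof (cases "a = u \<or> b = u")
    case True
    then show ?thesis using less.prems by blast
  next
    case False
    then obtain a1 b1 where a1: "cancel_step E u a1" "(cancel_step E)\<^sup>*\<^sup>* a1 a"
      and b1: "cancel_step E u b1" "(cancel_step E)\<^sup>*\<^sup>* b1 b"
      using less.prems by (metis converse_rtranclpE)
    obtain c d where cd: "(cancel_step E)\<^sup>*\<^sup>* a1 c" "(cancel_step E)\<^sup>*\<^sup>* b1 d" "(swap_step E)\<^sup>*\<^sup>* c d"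
      using cancel_step_local_confluence[OF a1(1) b1(1)] by blast
    have shorter: "length a1 < length u" "length b1 < length u" "length d < length u"
      using length_cancel_step[OF a1(1)] length_cancel_step[OF b1(1)] cancel_steps_length[OF cd(2)]
      by simp_all
    obtain a' c' where ac: "(cancel_step E)\<^sup>*\<^sup>* a a'" "(cancel_step E)\<^sup>*\<^sup>* c c'" "(swap_step E)\<^sup>*\<^sup>* a' c'"
      using less.hyps[OF shorter(1) a1(2) cd(1)] by blast
    obtain b' d' where bd: "(cancel_step E)\<^sup>*\<^sup>* b b'" "(cancel_step E)\<^sup>*\<^sup>* d d'" "(swap_step E)\<^sup>*\<^sup>* b' d'"
      using less.hyps[OF shorter(2) b1(2) cd(2)] by blast
    obtain c'' where c'': "(cancel_step E)\<^sup>*\<^sup>* d c''" "(swap_step E)\<^sup>*\<^sup>* c' c''"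
      using swaps_cancels_commute[OF ac(2) cd(3)] by blast
    obtain e1 e2 where e: "(cancel_step E)\<^sup>*\<^sup>* c'' e1" "(cancel_step E)\<^sup>*\<^sup>* d' e2" "(swap_step E)\<^sup>*\<^sup>* e1 e2"
      using less.hyps[OF shorter(3) c''(1) bd(2)] by blast
    have "(swap_step E)\<^sup>*\<^sup>* c'' a'"
      using swap_steps_sym ac(3) c''(2) by (meson rtranclp_trans)
    then obtain e1' where e1': "(cancel_step E)\<^sup>*\<^sup>* a' e1'" "(swap_step E)\<^sup>*\<^sup>* e1 e1'"
      using swaps_cancels_commute[OF e(1)] by blast
    obtain e2' where e2': "(cancel_step E)\<^sup>*\<^sup>* b' e2'" "(swap_step E)\<^sup>*\<^sup>* e2 e2'"
      using swaps_cancels_commute[OF e(2) swap_steps_sym[OF bd(3)]] by blast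
    have "(swap_step E)\<^sup>*\<^sup>* e1' e2'"
      using swap_steps_sym[OF e1'(2)] e(3) e2'(2) by (meson rtranclp_trans)
    then show ?thesis
      using ac(1) e1'(1) bd(1) e2'(1) by (meson rtranclp_trans)
  qed
qed

definition joinable :: "letter list \<Rightarrow> letter list \<Rightarrow> bool" where
  "joinable u v \<longleftrightarrow>
     (\<exists>u' v'. (cancel_step E)\<^sup>*\<^sup>* u u' \<and> (cancel_step E)\<^sup>*\<^sup>* v v' \<and> (swap_step E)\<^sup>*\<^sup>* u' v')"

lemma joinable_sym: "joinable u v \<Longrightarrow> joinable v u"
  unfolding joinable_def using swap_steps_sym by blast

lemma joinable_trans:
  assumes "joinable u v" "joinable v w"
  shows "joinable u w"
proof -
  obtain u1 v1 where 1: "(cancel_step E)\<^sup>*\<^sup>* u u1" "(cancel_step E)\<^sup>*\<^sup>* v v1" "(swap_step E)\<^sup>*\<^sup>* u1 v1"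
    using assms(1) unfolding joinable_def by blast
  obtain v2 w1 where 2: "(cancel_step E)\<^sup>*\<^sup>* v v2" "(cancel_step E)\<^sup>*\<^sup>* w w1" "(swap_step E)\<^sup>*\<^sup>* v2 w1"
    using assms(2) unfolding joinable_def by blast
  obtain c1 c2 where c: "(cancel_step E)\<^sup>*\<^sup>* v1 c1" "(cancel_step E)\<^sup>*\<^sup>* v2 c2" "(swap_step E)\<^sup>*\<^sup>* c1 c2"
    using cancels_confluent_modulo_swaps[OF 1(2) 2(1)] by blast
  obtain e1 where e1: "(cancel_step E)\<^sup>*\<^sup>* u1 e1" "(swap_step E)\<^sup>*\<^sup>* c1 e1"
    using swaps_cancels_commute[OF c(1) swap_steps_sym[OF 1(3)]] by blast
  obtain e2 where e2: "(cancel_step E)\<^sup>*\<^sup>* w1 e2" "(swap_step E)\<^sup>*\<^sup>* c2 e2"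
    using swaps_cancels_commute[OF c(2) 2(3)] by blast
  have "(swap_step E)\<^sup>*\<^sup>* e1 e2"
    using swap_steps_sym[OF e1(2)] c(3) e2(2) by (meson rtranclp_trans)
  then show ?thesis
    unfolding joinable_def using 1(1) e1(1) 2(2) e2(1) by (meson rtranclp_trans)
qed

lemma raag_step_joinable: "raag_step E u v \<Longrightarrow> joinable u v"
proof (induction rule: raag_step.induct)
  case (cancel u x v)
  let ?w = "u @ [x, inv_letter x] @ v"
  have "cancel_pair E ?w (length u) (Suc (length u))"
    by (auto simp: cancel_pair_def nth_append)
  moreover have "remove_pair (length u) (Suc (length u)) ?w = u @ v"
    by (subst remove_pair_eq_append) auto
  ultimately have "cancel_step E ?w (u @ v)"
    unfolding cancel_step_def by metis
  then show ?case
    unfolding joinable_def by blast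
next
  case (comm x y u v)
  then have "swap_step E (u @ [x, y] @ v) (u @ [y, x] @ v)"
    by (rule swap_step_append)
  then show ?case
    unfolding joinable_def by blast
qed

lemma raag_eq_joinable: "raag_eq E u v \<Longrightarrow> joinable u v"
  unfolding raag_eq_def
proof (induction rule: equivclp_induct)
  case base
  then show ?case unfolding joinable_def by blast
next
  case (step v w)
  then show ?case
    using raag_step_joinable joinable_sym joinable_trans by blast
qed

lemma geodesic_cancels_trivial:
  assumes "length u = raag_norm E u" "(cancel_step E)\<^sup>*\<^sup>* u a"
  shows "a = u"
proof (rule ccontr)
  assume "a \<noteq> u"
  then obtain a1 where a1: "cancel_step E u a1"
    using assms(2) by (metis converse_rtranclpE)
  then have "raag_norm E u \<le> length a1"
    using raag_norm_le_length raag_eq_sym cancel_step_raag_eq by blast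
  then show False
    using length_cancel_step[OF a1] assms(1) by simp
qed

theorem geodesic_raag_eq_imp_swaps:
  assumes "length u = raag_norm E u" "length v = raag_norm E v" "raag_eq E u v"
  shows "(swap_step E)\<^sup>*\<^sup>* u v"
  using raag_eq_joinable[OF assms(3)] geodesic_cancels_trivial assms(1,2)
  unfolding joinable_def by metis

end

section \<open>Right-counting entries under swaps\<close>

definition rcount_of :: "(nat \<Rightarrow> nat \<Rightarrow> bool) \<Rightarrow> letter \<Rightarrow> letter list \<Rightarrow> nat" where
  "rcount_of E c d = (LEAST m. \<exists>x y. (\<forall>b \<in> set x. E (fst c) (fst b))
       \<and> raag_eq E d (x @ [c] @ y) \<and> raag_norm E y = m)"

lemma rcount_eq_rcount_of: "rcount E ws i = rcount_of E (ws ! i) (drop i ws)"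
  unfolding rcount_def rcount_of_def by simp

lemma rcount_of_raag_eq:
  assumes "raag_eq E d d'"
  shows "rcount_of E c d = rcount_of E c d'"
proof -
  have "raag_eq E d w = raag_eq E d' w" for w
    using assms raag_eq_sym raag_eq_trans by metis
  then show ?thesis
    unfolding rcount_of_def by simp
qed

lemma rcount_of_link_Cons:
  assumes link: "E (fst c) (fst c')"
  shows "rcount_of E c (c' # d) = rcount_of E c d"
proof -
  have "(\<exists>x y. (\<forall>b \<in> set x. E (fst c) (fst b)) \<and> raag_eq E (c' # d) (x @ [c] @ y) \<and> P y)
      \<longleftrightarrow> (\<exists>x y. (\<forall>b \<in> set x. E (fst c) (fst b)) \<and> raag_eq E d (x @ [c] @ y) \<and> P y)" for P
  proof
    assume "\<exists>x y. (\<forall>b \<in> set x. E (fst c) (fst b)) \<and> raag_eq E (c' # d) (x @ [c] @ y) \<and> P y"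
    then obtain x y where xy: "\<forall>b \<in> set x. E (fst c) (fst b)" "raag_eq E (c' # d) (x @ [c] @ y)" "P y"
      by blast
    have "raag_step E ([] @ [inv_letter c', inv_letter (inv_letter c')] @ d) ([] @ d)"
      by (rule raag_step.cancel)
    then have "raag_eq E d (inv_letter c' # c' # d)"
      using raag_step_imp_raag_eq raag_eq_sym by fastforce
    then have "raag_eq E d ((inv_letter c' # x) @ [c] @ y)"
      using raag_eq_Cons[OF xy(2)] raag_eq_trans by fastforce
    moreover have "\<forall>b \<in> set (inv_letter c' # x). E (fst c) (fst b)"
      using xy(1) link by simp
    ultimately show "\<exists>x y. (\<forall>b \<in> set x. E (fst c) (fst b)) \<and> raag_eq E d (x @ [c] @ y) \<and> P y"
      using xy(3) by blast
  next
    assume "\<exists>x y. (\<forall>b \<in> set x. E (fst c) (fst b)) \<and> raag_eq E d (x @ [c] @ y) \<and> P y"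
    then obtain x y where xy: "\<forall>b \<in> set x. E (fst c) (fst b)" "raag_eq E d (x @ [c] @ y)" "P y"
      by blast
    moreover have "raag_eq E (c' # d) ((c' # x) @ [c] @ y)"
      using raag_eq_Cons[OF xy(2)] by simp
    moreover have "\<forall>b \<in> set (c' # x). E (fst c) (fst b)"
      using xy(1) link by simp
    ultimately show "\<exists>x y. (\<forall>b \<in> set x. E (fst c) (fst b)) \<and> raag_eq E (c' # d) (x @ [c] @ y) \<and> P y"
      by blast
  qed
  then show ?thesis
    unfolding rcount_of_def by simp
qed

lemma rcount_le_length_drop: "k < length ws \<Longrightarrow> rcount E ws k \<le> length ws - Suc k"
proof -
  assume k: "k < length ws"
  have "drop k ws = [] @ [ws ! k] @ drop (Suc k) ws"
    using k by (simp add: Cons_nth_drop_Suc)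
  then have "rcount E ws k \<le> raag_norm E (drop (Suc k) ws)"
    unfolding rcount_def
    by (intro Least_le) (rule exI[of _ "[]"], rule exI[of _ "drop (Suc k) ws"], simp)
  also have "\<dots> \<le> length (drop (Suc k) ws)"
    by (rule raag_norm_le_length) simp
  finally show ?thesis by simp
qed

definition sigma_block :: "(nat \<Rightarrow> nat \<Rightarrow> bool) \<Rightarrow> nat \<Rightarrow> letter list \<Rightarrow> nat \<Rightarrow> letter list" where
  "sigma_block E M ws i = gpow (fst (ws ! i)) (sig_exp E M ws i)"

lemma sigma_eq_concat_blocks: "sigma E M ws = concat (map (sigma_block E M ws) [0..<length ws])"
  unfolding sigma_def sigma_block_def by simp

lemma fst_in_set_gpow: "c \<in> set (gpow a N) \<Longrightarrow> fst c = a"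
  unfolding gpow_def by auto

lemma upt_split_adjacent: "Suc k < n \<Longrightarrow> [0..<n] = [0..<k] @ [k, Suc k] @ [Suc (Suc k)..<n]"
proof -
  assume "Suc k < n"
  then have "[0..<n] = [0..<k] @ [k..<n]"
    by (metis le0 less_imp_le_nat Suc_lessD upt_add_eq_append le_add_diff_inverse)
  moreover have "[k..<n] = k # Suc k # [Suc (Suc k)..<n]"
    using \<open>Suc k < n\<close> by (simp add: upt_conv_Cons)
  ultimately show ?thesis by simp
qed

context commutation_graph
begin

lemma rcount_swap_adjacent:
  assumes k: "Suc k < length u" "E (fst (u ! k)) (fst (u ! Suc k))" and i: "i < length u"
  shows "rcount E (swap_adjacent k u) i = rcount E u (swap_index k i)"
proof -
  define p y z q where "p = take k u" and "y = u ! k" and "z = u ! Suc k"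
    and "q = drop (Suc (Suc k)) u"
  have u: "u = p @ [y, z] @ q" and v: "swap_adjacent k u = p @ [z, y] @ q"
    using k(1) swap_adjacent_eq_append[OF k(1)] unfolding p_def y_def z_def q_def
    by (simp_all add: Cons_nth_drop_Suc)
  have lhs: "rcount E (swap_adjacent k u) i = rcount_of E ((p @ [z, y] @ q) ! i) (drop i (p @ [z, y] @ q))"
    by (simp only: v rcount_eq_rcount_of)
  have rhs: "rcount E u j = rcount_of E ((p @ [y, z] @ q) ! j) (drop j (p @ [y, z] @ q))" for j
    by (simp only: u[symmetric] rcount_eq_rcount_of)
  have lp: "length p = k"
    using k(1) unfolding p_def by simp
  have yz: "E (fst y) (fst z)"
    using k(2) unfolding y_def z_def .
  have swap: "raag_eq E (z # y # q) (y # z # q)"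
    using raag_step.comm[of E z y "[]" q] E_sym[OF yz] raag_step_imp_raag_eq by simp
  consider "i < k" | "i = k" | "i = Suc k" | "Suc k < i" by linarith
  then show ?thesis
  proof cases
    case 1
    have "raag_eq E (drop i p @ [z, y] @ q) (drop i p @ [y, z] @ q)"
      using raag_eq_context[OF swap, of "drop i p" "[]"] by simp
    then show ?thesis
      using 1 lp unfolding lhs rhs by (simp add: nth_append rcount_of_raag_eq)
  next
    case 2
    have "rcount_of E z (z # y # q) = rcount_of E z (z # q)"
      using rcount_of_raag_eq[OF swap, of z] rcount_of_link_Cons[of E z y "z # q", OF E_sym[OF yz]] by simp
    then show ?thesis
      using 2 lp unfolding lhs rhs by (simp add: nth_append)
  next
    case 3
    have "rcount_of E y (y # q) = rcount_of E y (y # z # q)"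
      using rcount_of_raag_eq[OF swap, of y] rcount_of_link_Cons[of E y z "y # q", OF yz] by simp
    then show ?thesis
      using 3 lp unfolding lhs rhs by (simp add: nth_append)
  next
    case 4
    then obtain m where "i = Suc (Suc (k + m))"
      using less_imp_Suc_add by blast
    then show ?thesis
      using lp unfolding lhs rhs by (simp add: nth_append)
  qed
qed

lemma sigma_swap_step:
  assumes "swap_step E u v"
  shows "raag_eq E (sigma E M u) (sigma E M v)"
proof -
  obtain k where k: "Suc k < length u" "E (fst (u ! k)) (fst (u ! Suc k))" "v = swap_adjacent k u"
    using assms unfolding swap_step_def by blast
  let ?b = "sigma_block E M u" and ?b' = "sigma_block E M v"
  have swapped: "?b' i = ?b (swap_index k i)" if "i < length u" for i
    using that k rcount_swap_adjacent[OF k(1,2) that]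
    by (simp add: sigma_block_def sig_exp_def swap_index_less)
  let ?pre = "concat (map ?b [0..<k])" and ?post = "concat (map ?b [Suc (Suc k)..<length u])"
  have u: "sigma E M u = ?pre @ (?b k @ ?b (Suc k)) @ ?post"
    unfolding sigma_eq_concat_blocks using upt_split_adjacent[OF k(1)] by simp
  have "sigma E M v = concat (map ?b' [0..<k]) @ (?b' k @ ?b' (Suc k))
      @ concat (map ?b' [Suc (Suc k)..<length u])"
    unfolding sigma_eq_concat_blocks using upt_split_adjacent[OF k(1)] k(3) by simp
  also have "\<dots> = ?pre @ (?b (Suc k) @ ?b k) @ ?post"
  proof -
    have pre: "map ?b' [0..<k] = map ?b [0..<k]"
      and post: "map ?b' [Suc (Suc k)..<length u] = map ?b [Suc (Suc k)..<length u]"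
      using swapped k(1) by (auto intro!: map_cong)
    show ?thesis
      unfolding pre post using swapped k(1) by simp
  qed
  finally have v: "sigma E M v = ?pre @ (?b (Suc k) @ ?b k) @ ?post" .
  have "raag_eq E (?b k @ ?b (Suc k)) (?b (Suc k) @ ?b k)"
    using k(2) by (intro raag_eq_commute_blocks) (auto simp: sigma_block_def dest!: fst_in_set_gpow)
  then show ?thesis
    unfolding u v by (rule raag_eq_context)
qed

lemma sigma_swap_steps: "(swap_step E)\<^sup>*\<^sup>* u v \<Longrightarrow> raag_eq E (sigma E M u) (sigma E M v)"
  by (induction rule: rtranclp_induct) (auto dest: sigma_swap_step intro: raag_eq_trans)

end

section \<open>Canonical expressions and the sequence u\<close>

lemma useq_eq:
  assumes "p < n"
  shows "useq n (2 * n * q + (2 * p + (if s then 0 else 1))) = (p, (if s then 1 else -2) * 4 ^ q)"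
proof -
  let ?r = "2 * p + (if s then 0 else 1)"
  have "?r < 2 * n"
    using assms by auto
  then have "(2 * n * q + ?r) div (2 * n) = q" "(2 * n * q + ?r) mod (2 * n) = ?r"
    by simp_all
  then show ?thesis
    unfolding useq_def by (simp add: power_add power_mult)
qed

lemma canonical_expr_sigma_in_useq:
  assumes over: "word_over n ws" and short: "length ws \<le> M" and canonical: "canonical_expr E ws"
  shows "\<exists>j :: nat \<Rightarrow> nat. (\<forall>k k'. k < k' \<and> k' < length ws \<longrightarrow> j k < j k')
           \<and> (\<forall>k < length ws. (fst (ws ! k), sig_exp E M ws k) = useq n (j k))"
proof -
  define q where "q k = M - 1 - rcount E ws k" for k
  define r where "r k = 2 * fst (ws ! k) + (if snd (ws ! k) then 0 else 1)" for k
  define j where "j k = 2 * n * q k + r k" for k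
  have r_less: "r k < 2 * n" if "k < length ws" for k
  proof -
    have "fst (ws ! k) < n"
      using over nth_mem[OF that] unfolding word_over_def by blast
    then show ?thesis
      unfolding r_def by auto
  qed
  have "j k < j k'" if kk': "k < k'" "k' < length ws" for k k'
  proof (cases "rcount E ws k' = rcount E ws k")
    case True
    then have "fst (ws ! k) < fst (ws ! k')"
      using canonical kk' unfolding canonical_expr_def by auto
    then show ?thesis
      unfolding j_def q_def r_def using True by auto
  next
    case False
    have "rcount E ws k \<le> M - 1"
      using rcount_le_length_drop[of k ws E] kk' short by linarith
    moreover have "rcount E ws k' \<le> rcount E ws k"
      using canonical kk' unfolding canonical_expr_def by blast
    ultimately have "Suc (q k) \<le> q k'"
      using False unfolding q_def by linarith
    then have "2 * n * q k + 2 * n \<le> 2 * n * q k'"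
      using mult_le_mono2[of "Suc (q k)" "q k'" "2 * n"] by simp
    then show ?thesis
      unfolding j_def using r_less[of k] kk' by linarith
  qed
  moreover have "(fst (ws ! k), sig_exp E M ws k) = useq n (j k)" if "k < length ws" for k
    using over that useq_eq[of "fst (ws ! k)" n "q k" "snd (ws ! k)"]
    unfolding j_def r_def q_def sig_exp_def word_over_def by simp
  ultimately show ?thesis by blast
qed

theorem lemma3p3:
  fixes n M :: nat and E :: "nat \<Rightarrow> nat \<Rightarrow> bool"
  assumes "n \<ge> 1" and "simplicial_graph n E" and "M > 0"
  shows "(\<forall>ws vs. word_over n ws \<and> word_over n vs \<and> raag_eq E ws vs
            \<and> length ws = raag_norm E ws \<and> length vs = length ws \<and> raag_norm E ws \<le> M
            \<longrightarrow> raag_eq E (sigma E M ws) (sigma E M vs))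
       \<and> (\<forall>ws. word_over n ws \<and> length ws = raag_norm E ws \<and> raag_norm E ws \<le> M
            \<and> canonical_expr E ws
            \<longrightarrow> (\<exists>j :: nat \<Rightarrow> nat. (\<forall>k k'. k < k' \<and> k' < length ws \<longrightarrow> j k < j k')
                  \<and> (\<forall>k < length ws. (fst (ws ! k), sig_exp E M ws k) = useq n (j k))))"
proof -
  interpret commutation_graph E
    using assms(2) by unfold_locales (auto simp: simplicial_graph_def)
  show ?thesis
  proof (intro conjI allI impI)
    fix ws vs
    assume "word_over n ws \<and> word_over n vs \<and> raag_eq E ws vs
      \<and> length ws = raag_norm E ws \<and> length vs = length ws \<and> raag_norm E ws \<le> M"
    then have "(swap_step E)\<^sup>*\<^sup>* ws vs"
      using geodesic_raag_eq_imp_swaps raag_norm_raag_eq by metis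
    then show "raag_eq E (sigma E M ws) (sigma E M vs)"
      by (rule sigma_swap_steps)
  next
    fix ws
    assume "word_over n ws \<and> length ws = raag_norm E ws \<and> raag_norm E ws \<le> M
      \<and> canonical_expr E ws"
    then show "\<exists>j :: nat \<Rightarrow> nat. (\<forall>k k'. k < k' \<and> k' < length ws \<longrightarrow> j k < j k')
        \<and> (\<forall>k < length ws. (fst (ws ! k), sig_exp E M ws k) = useq n (j k))"
      using canonical_expr_sigma_in_useq[of n ws M E] by simp
  qed
qed

end
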